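(* Let $\mathfrak{a}=(A,d,\star,1)$ be a dg left unital pre-Lie algebra over a field of characteristic $0$ with a weight grading $A\cong\prod_{n\ge0}A^{(n)}$ such that $1\in A^{(0)}$, $A^{(n)}\star A^{(m)}\subset A^{(n+m)}$, and $g=\prod_{n\ge1}A^{(n)}$. Let $\alpha\in A$ be a Maurer–Cartan element in augmented (square-zero) form and $\lambda\in g_0$. Then the flow $t\mapsto e^{t\,\mathrm{ad}_\lambda}(\alpha)$ of the infinitesimal action $\mathrm{ad}_\lambda=[\lambda,-]$ converges at $t=1$, and the resulting gauge action is given by $$\lambda.\alpha=e^{\mathrm{ad}_\lambda}(\alpha)=\left(e^\lambda\star\alpha\right)\circledcirc e^{-\lambda}.$$
   Context: Pre-Lie identity: $(x\star y)\star z-x\star(y\star z)=(-1)^{|y||z|}((x\star z)\star y-x\star(z\star y))$; left unit: $1\star x=x$; Lie bracket $[x,y]=x\star y-(-1)^{|x||y|}y\star x$, so for $\lambda$ of degree $0$, $\mathrm{ad}_\lambda(x)=\lambda\star x-x\star\lambda$ and $e^{t\,\mathrm{ad}_\lambda}=\sum_n t^n\mathrm{ad}_\lambda^n/n!$. Maurer–Cartan elements are taken in augmented form, i.e. degree $-1$ elements $\alpha$ (in the main example $\alpha=\delta+\bar\alpha$ with $\delta$ representing the differential) satisfying the square-zero equation $[\alpha,\alpha]=0$. Pre-Lie exponential $e^\lambda=\sum_n\lambda^{\star n}/n!$ with right-iterated powers $\lambda^{\star n}=(\cdots(\lambda\star\lambda)\star\cdots)\star\lambda$. Symmetric braces: $\{a;\}=a$,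 $\{a;b_1\}=a\star b_1$, $\{a;b_1,\dots,b_n\}=\{\{a;b_1,\dots,b_{n-1}\};b_n\}-\sum_{i=1}^{n-1}\{a;b_1,\dots,\{b_i;b_n\},\dots,b_{n-1}\}$; circle product $a\circledcirc(1+b)=\sum_{n\ge0}\frac1{n!}\{a;b,\dots,b\}$ for $b$ with trivial weight $0$ component. *)

theory Defs
  imports Complex_Main
begin

text \<open>Carrier: the type 'a.  scale: scalar multiplication.  pr: product (written star).
  one: the left unit.  d: the differential (homological degree -1).
  hdeg k: the elements of homological degree k.  wt n: the weight-n part A^(n).
  prj n: the projection of A = prod_n A^(n) onto A^(n).\<close>

definition sgn_deg :: "int \<Rightarrow> 'a::ab_group_add \<Rightarrow> 'a" where
  "sgn_deg k v = (if even k then v else - v)"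

definition wg_dg_preLie ::
  "('k::field_char_0 \<Rightarrow> 'a::ab_group_add \<Rightarrow> 'a) \<Rightarrow> ('a \<Rightarrow> 'a \<Rightarrow> 'a) \<Rightarrow> 'a \<Rightarrow> ('a \<Rightarrow> 'a)
    \<Rightarrow> (int \<Rightarrow> 'a set) \<Rightarrow> (nat \<Rightarrow> 'a set) \<Rightarrow> (nat \<Rightarrow> 'a \<Rightarrow> 'a) \<Rightarrow> bool" where
  "wg_dg_preLie scale pr one d hdeg wt prj \<longleftrightarrow>
     vector_space scale
   \<comment> \<open>bilinear product\<close>
   \<and> (\<forall>x. Vector_Spaces.linear scale scale (pr x))
   \<and> (\<forall>y. Vector_Spaces.linear scale scale (\<lambda>x. pr x y))
   \<comment> \<open>homological grading\<close>
   \<and> (\<forall>k. module.subspace scale (hdeg k))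
   \<and> (\<forall>K c. finite K \<and> (\<forall>k\<in>K. c k \<in> hdeg k) \<and> (\<Sum>k\<in>K. c k) = 0 \<longrightarrow> (\<forall>k\<in>K. c k = 0))
   \<comment> \<open>weight grading: A is the product of the A^(n)\<close>
   \<and> (\<forall>n. module.subspace scale (wt n))
   \<and> (\<forall>n. Vector_Spaces.linear scale scale (prj n))
   \<and> (\<forall>n x. prj n x \<in> wt n)
   \<and> (\<forall>n m x. x \<in> wt m \<longrightarrow> prj n x = (if n = m then x else 0))
   \<and> (\<forall>x y. (\<forall>n. prj n x = prj n y) \<longrightarrow> x = y)
   \<and> (\<forall>f. (\<forall>n. f n \<in> wt n) \<longrightarrow> (\<exists>x. \<forall>n. prj n x = f n))
   \<comment> \<open>compatibility of the two gradings: each A^(n) is the direct sum of its homogeneous parts,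
       and A_k is the product of the A^(n)_k\<close>
   \<and> (\<forall>n x. x \<in> wt n \<longrightarrow> (\<exists>K c. finite K \<and> (\<forall>k\<in>K. c k \<in> wt n \<inter> hdeg k) \<and> x = (\<Sum>k\<in>K. c k)))
   \<and> (\<forall>k n x. x \<in> hdeg k \<longrightarrow> prj n x \<in> hdeg k)
   \<and> (\<forall>k x. (\<forall>n. prj n x \<in> hdeg k) \<longrightarrow> x \<in> hdeg k)
   \<comment> \<open>compatibility of the product with the gradings\<close>
   \<and> (\<forall>p q x y. x \<in> hdeg p \<and> y \<in> hdeg q \<longrightarrow> pr x y \<in> hdeg (p + q))
   \<and> (\<forall>n m x y. x \<in> wt n \<and> y \<in> wt m \<longrightarrow> pr x y \<in> wt (n + m))
   \<and> (\<forall>n x y. prj n (pr x y) = (\<Sum>i\<le>n. pr (prj i x) (prj (n - i) y)))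
   \<comment> \<open>left unit\<close>
   \<and> one \<in> wt 0 \<and> one \<in> hdeg 0
   \<and> (\<forall>x. pr one x = x)
   \<comment> \<open>graded pre-Lie identity\<close>
   \<and> (\<forall>x y z p q. y \<in> hdeg p \<and> z \<in> hdeg q \<longrightarrow>
        pr (pr x y) z - pr x (pr y z) = sgn_deg (p * q) (pr (pr x z) y - pr x (pr z y)))
   \<comment> \<open>differential: degree -1, square zero, weight preserving, derivation\<close>
   \<and> Vector_Spaces.linear scale scale d
   \<and> (\<forall>k x. x \<in> hdeg k \<longrightarrow> d x \<in> hdeg (k - 1))
   \<and> (\<forall>x. d (d x) = 0)
   \<and> (\<forall>n x. prj n (d x) = d (prj n x))
   \<and> (\<forall>p x y. x \<in> hdeg p \<longrightarrow> d (pr x y) = pr (d x) y + sgn_deg p (pr x (d y)))"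

definition lie_br :: "('a::ab_group_add \<Rightarrow> 'a \<Rightarrow> 'a) \<Rightarrow> int \<Rightarrow> int \<Rightarrow> 'a \<Rightarrow> 'a \<Rightarrow> 'a" where
  "lie_br pr p q x y = pr x y - sgn_deg (p * q) (pr y x)"

text \<open>ad_lambda for lambda of degree 0.\<close>
definition ad :: "('a::ab_group_add \<Rightarrow> 'a \<Rightarrow> 'a) \<Rightarrow> 'a \<Rightarrow> 'a \<Rightarrow> 'a" where
  "ad pr l x = pr l x - pr x l"

definition wsums :: "(nat \<Rightarrow> 'a \<Rightarrow> 'a) \<Rightarrow> (nat \<Rightarrow> 'a::ab_group_add) \<Rightarrow> 'a \<Rightarrow> bool" where
  "wsums prj f L \<longleftrightarrow> (\<forall>m. \<exists>N. \<forall>K\<ge>N. prj m (\<Sum>n<K. f n) = prj m L)"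

primrec ppow :: "('a \<Rightarrow> 'a \<Rightarrow> 'a) \<Rightarrow> 'a \<Rightarrow> 'a \<Rightarrow> nat \<Rightarrow> 'a" where
  "ppow pr one l 0 = one"
| "ppow pr one l (Suc n) = (if n = 0 then l else pr (ppow pr one l n) l)"

definition pexp :: "('k::field_char_0 \<Rightarrow> 'a::ab_group_add \<Rightarrow> 'a) \<Rightarrow> ('a \<Rightarrow> 'a \<Rightarrow> 'a) \<Rightarrow> 'a
    \<Rightarrow> (nat \<Rightarrow> 'a \<Rightarrow> 'a) \<Rightarrow> 'a \<Rightarrow> 'a" where
  "pexp scale pr one prj l = (THE L. wsums prj (\<lambda>n. scale (1 / fact n) (ppow pr one l n)) L)"

text \<open>Symmetric braces {a; b_0, ..., b_(n-1)}, arguments given by f 0, ..., f (n-1).\<close>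
primrec brace :: "('a::ab_group_add \<Rightarrow> 'a \<Rightarrow> 'a) \<Rightarrow> nat \<Rightarrow> 'a \<Rightarrow> (nat \<Rightarrow> 'a) \<Rightarrow> 'a" where
  "brace pr 0 a f = a"
| "brace pr (Suc n) a f =
     pr (brace pr n a f) (f n) - (\<Sum>i<n. brace pr n a (f(i := pr (f i) (f n))))"

text \<open>Circle product a \<circledcirc> c where c = 1 + b: sum_n (1/n!) {a; b, ..., b}.\<close>
definition circ :: "('k::field_char_0 \<Rightarrow> 'a::ab_group_add \<Rightarrow> 'a) \<Rightarrow> ('a \<Rightarrow> 'a \<Rightarrow> 'a) \<Rightarrow> 'a
    \<Rightarrow> (nat \<Rightarrow> 'a \<Rightarrow> 'a) \<Rightarrow> 'a \<Rightarrow> 'a \<Rightarrow> 'a" where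
  "circ scale pr one prj a c =
     (THE L. wsums prj (\<lambda>n. scale (1 / fact n) (brace pr n a (\<lambda>_. c - one))) L)"

end

theory Submission
  imports Defs "HOL-Library.FuncSet" "HOL-Combinatorics.Transposition"
begin

text \<open>Both sides are compared weight by weight. For mu of degree 0 and positive weight, expanding
  e^mu - 1 multilinearly inside the symmetric braces and regrouping by total weight turns
  a \<circledcirc> e^mu into the sum of (a \<star> mu \<star> \<dots> \<star> mu) / N! (right-iterated products); the
  weight-(N+1) part is obtained from the weight-N part by right multiplication with mu, which
  follows from the defining recursion of the braces, their symmetry (the pre-Lie identity in
  degree 0) and mu^(k+1) = mu^k \<star> mu. On the other side, the pre-Lie identity for lambda of
  degree 0 gives y \<star> [lambda, z] = (y \<star> lambda) \<star> z - (y \<star> z) \<star> lambda, whence the binomial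
  formula ad_lambda^n(alpha) = \<Sum>_p (n choose p) R_(-lambda)^p (lambda^(n-p) \<star> alpha) with R_mu
  the right multiplication by mu. Dividing by n! and summing gives
  e^(R_(-lambda)) (e^lambda \<star> alpha) for both sides. Neither the differential nor the
  Maurer-Cartan equation enters: the identity holds for every homogeneous alpha.\<close>

lemma sum_offdiag_swap:
  fixes g :: "nat \<Rightarrow> nat \<Rightarrow> 'b::comm_monoid_add"
  shows "(\<Sum>i<m. \<Sum>j\<in>{..<m} - {i}. g i j) = (\<Sum>i<m. \<Sum>j\<in>{..<m} - {i}. g j i)"
proof -
  have offdiag: "(\<Sum>j\<in>{..<m} - {i}. h j) = (\<Sum>j<m. if j = i then 0 else h j)" for i and h :: "nat \<Rightarrow> 'b"
    by (simp add: sum.If_cases Diff_eq)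
  show ?thesis
    unfolding offdiag by (subst sum.swap) (auto intro!: sum.cong)
qed

subsection \<open>Compositions\<close>

definition compositions :: "nat \<Rightarrow> nat \<Rightarrow> (nat \<Rightarrow> nat) set" where
  "compositions n N = {g \<in> PiE {..<n} (\<lambda>_. {1..N}). (\<Sum>i<n. g i) = N}"

lemma compositions_iff:
  "g \<in> compositions n N \<longleftrightarrow>
     (\<forall>i<n. 1 \<le> g i \<and> g i \<le> N) \<and> (\<forall>i\<ge>n. g i = undefined) \<and> (\<Sum>i<n. g i) = N"
  by (auto simp: compositions_def PiE_def Pi_def extensional_def)

lemma finite_compositions: "finite (compositions n N)"
  unfolding compositions_def
  by (rule finite_subset[of _ "PiE {..<n} (\<lambda>_. {1..N})"]) (auto intro: finite_PiE)

lemma compositions_0_0: "compositions 0 0 = {\<lambda>_. undefined}"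
  by (auto simp: compositions_def PiE_def extensional_def)

lemma compositions_empty: "N < n \<Longrightarrow> compositions n N = {}"
proof (rule ccontr)
  assume "N < n" "compositions n N \<noteq> {}"
  then obtain g where g: "g \<in> compositions n N" by auto
  then have "(\<Sum>i<n. 1) \<le> (\<Sum>i<n. g i)" by (intro sum_mono) (simp add: compositions_iff)
  then show False using g \<open>N < n\<close> by (simp add: compositions_iff)
qed

lemma compositions_two_parts_le:
  assumes "g \<in> compositions n N" "i < n" "j < n" "i \<noteq> j"
  shows "g i + g j \<le> N"
proof -
  have "g i + g j = (\<Sum>k\<in>{i, j}. g k)" using assms by simp
  also have "\<dots> \<le> (\<Sum>k<n. g k)" by (rule sum_mono2) (use assms in auto)
  finally show ?thesis using assms by (simp add: compositions_iff)
qed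

lemma sum_fun_upd_add:
  fixes r :: "nat \<Rightarrow> nat"
  assumes "i < n"
  shows "(\<Sum>j<n. (r(i := r i + t)) j) = (\<Sum>j<n. r j) + t"
proof -
  have "(\<Sum>j<n. (r(i := r i + t)) j) = (\<Sum>j<n. r j + (if j = i then t else 0))"
    by (rule sum.cong) auto
  then show ?thesis using assms by (simp add: sum.distrib)
qed

lemma bij_betw_compositions_incr:
  assumes i: "i < n"
  shows "bij_betw (\<lambda>g. g(i := Suc (g i))) (compositions n N) {g \<in> compositions n (Suc N). g i \<noteq> 1}"
proof (rule bij_betwI[where g = "\<lambda>g. g(i := g i - 1)"])
  show "(\<lambda>g. g(i := Suc (g i))) \<in> compositions n N \<rightarrow> {g \<in> compositions n (Suc N). g i \<noteq> 1}"
  proof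
    fix g assume g: "g \<in> compositions n N"
    then have bounds: "1 \<le> g j \<and> g j \<le> N" if "j < n" for j
      using that by (simp add: compositions_iff)
    have "0 < g i" using bounds[OF i] by simp
    moreover have "(\<Sum>j<n. (g(i := g i + 1)) j) = Suc N"
      using sum_fun_upd_add[OF i, of g 1] g by (simp add: compositions_iff)
    ultimately show "g(i := Suc (g i)) \<in> {g \<in> compositions n (Suc N). g i \<noteq> 1}"
      using g i unfolding compositions_iff by (simp add: le_SucI)
  qed
  show "(\<lambda>g. g(i := g i - 1)) \<in> {g \<in> compositions n (Suc N). g i \<noteq> 1} \<rightarrow> compositions n N"
  proof
    fix g assume g: "g \<in> {g \<in> compositions n (Suc N). g i \<noteq> 1}"
    then have gi: "2 \<le> g i" using i by (auto simp: compositions_iff)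
    have "(\<Sum>j<n. (g(i := g i - 1)) j) + 1 = (\<Sum>j<n. g j)"
      using sum_fun_upd_add[OF i, of "g(i := g i - 1)" 1] gi by (simp add: fun_upd_idem)
    moreover have "g j \<le> N" if "j < n" "j \<noteq> i" for j
      using compositions_two_parts_le[of g n "Suc N" i j] g i gi that by auto
    ultimately show "g(i := g i - 1) \<in> compositions n N"
      using g i by (auto simp: compositions_iff)
  qed
qed (use i in \<open>auto simp: compositions_iff\<close>)

lemma bij_betw_compositions_one_last:
  "bij_betw (\<lambda>g. g(m := 1)) (compositions m N) {g \<in> compositions (Suc m) (Suc N). g m = 1}"
proof (rule bij_betwI[where g = "\<lambda>g. g(m := undefined)"])
  have [simp]: "(\<Sum>j<m. (g(m := c)) j) = (\<Sum>j<m. g j)" for g :: "nat \<Rightarrow> nat" and c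
    by (rule sum.cong) auto
  show "(\<lambda>g. g(m := 1)) \<in> compositions m N \<rightarrow> {g \<in> compositions (Suc m) (Suc N). g m = 1}"
    by (auto simp: compositions_iff less_Suc_eq intro: le_SucI)
  show "(\<lambda>g. g(m := undefined)) \<in> {g \<in> compositions (Suc m) (Suc N). g m = 1} \<rightarrow> compositions m N"
  proof
    fix g assume g: "g \<in> {g \<in> compositions (Suc m) (Suc N). g m = 1}"
    have "g j \<le> N" if "j < m" for j
      using compositions_two_parts_le[of g "Suc m" "Suc N" j m] g that by auto
    then show "g(m := undefined) \<in> compositions m N" using g by (auto simp: compositions_iff)
  qed
qed (auto simp: compositions_iff fun_eq_iff)

lemma compositions_comp_transpose:
  assumes "g \<in> compositions n N" "i < n" "j < n"
  shows "g \<circ> transpose i j \<in> compositions n N"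
proof -
  have "(\<Sum>k<n. g (transpose i j k)) = (\<Sum>k<n. g k)"
    using sum.reindex_bij_betw[of "transpose i j" "{..<n}" "{..<n}" g] assms(2,3) by simp
  moreover have "transpose i j k < n \<longleftrightarrow> k < n" for k
    using assms(2,3) by (auto simp: transpose_def)
  ultimately show ?thesis
    using assms by (auto simp: compositions_iff)
qed

lemma compositions_eq_bounded:
  assumes "N \<le> M"
  shows "{g \<in> PiE {..<n} (\<lambda>_. {1..M}). (\<Sum>i<n. g i) = N} = compositions n N"
proof (intro set_eqI iffI)
  fix g assume g: "g \<in> {g \<in> PiE {..<n} (\<lambda>_. {1..M}). (\<Sum>i<n. g i) = N}"
  have "g i \<le> N" if "i < n" for i
    using member_le_sum[of i "{..<n}" g] g that by simp
  with g show "g \<in> compositions n N"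
    by (auto simp: compositions_iff PiE_iff extensional_def)
next
  fix g assume "g \<in> compositions n N"
  with assms show "g \<in> {g \<in> PiE {..<n} (\<lambda>_. {1..M}). (\<Sum>i<n. g i) = N}"
    by (auto simp: compositions_iff PiE_iff extensional_def)
qed

locale complete_preLie =
  fixes scale :: "'k::field_char_0 \<Rightarrow> 'a::ab_group_add \<Rightarrow> 'a"
    and pr :: "'a \<Rightarrow> 'a \<Rightarrow> 'a" and one :: 'a
    and hdeg :: "int \<Rightarrow> 'a set" and wt :: "nat \<Rightarrow> 'a set" and prj :: "nat \<Rightarrow> 'a \<Rightarrow> 'a"
  assumes vector_space: "vector_space scale"
    and pr_linear_right: "\<And>x. Vector_Spaces.linear scale scale (pr x)"
    and pr_linear_left: "\<And>y. Vector_Spaces.linear scale scale (\<lambda>x. pr x y)"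
    and hdeg_subspace: "\<And>k. module.subspace scale (hdeg k)"
    and prj_linear: "\<And>n. Vector_Spaces.linear scale scale (prj n)"
    and prj_in_wt: "\<And>n x. prj n x \<in> wt n"
    and prj_ext: "\<And>x y. (\<And>n. prj n x = prj n y) \<Longrightarrow> x = y"
    and prj_surj: "\<And>f. (\<And>n. f n \<in> wt n) \<Longrightarrow> \<exists>x. \<forall>n. prj n x = f n"
    and pr_hdeg: "\<And>p q x y. x \<in> hdeg p \<Longrightarrow> y \<in> hdeg q \<Longrightarrow> pr x y \<in> hdeg (p + q)"
    and prj_pr: "\<And>n x y. prj n (pr x y) = (\<Sum>i\<le>n. pr (prj i x) (prj (n - i) y))"
    and one_hdeg: "one \<in> hdeg 0"
    and pr_one_left: "\<And>x. pr one x = x"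
    and preLie: "\<And>x y z p q. y \<in> hdeg p \<Longrightarrow> z \<in> hdeg q \<Longrightarrow>
        pr (pr x y) z - pr x (pr y z) = sgn_deg (p * q) (pr (pr x z) y - pr x (pr z y))"
begin

sublocale vector_space scale by (rule vector_space)

lemma pr_add_right: "pr x (u + v) = pr x u + pr x v"
  and pr_scale_right: "pr x (scale c u) = scale c (pr x u)"
  using pr_linear_right[of x] unfolding Vector_Spaces.linear_def module_hom_def module_hom_axioms_def by auto

lemma pr_add_left: "pr (u + v) y = pr u y + pr v y"
  and pr_scale_left: "pr (scale c u) y = scale c (pr u y)"
  using pr_linear_left[of y] unfolding Vector_Spaces.linear_def module_hom_def module_hom_axioms_def by auto

lemma prj_add: "prj n (u + v) = prj n u + prj n v"
  and prj_scale: "prj n (scale c u) = scale c (prj n u)"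
  using prj_linear[of n] unfolding Vector_Spaces.linear_def module_hom_def module_hom_axioms_def by auto

interpretation pr_right: additive "pr x" by standard (rule pr_add_right)
interpretation pr_left: additive "\<lambda>u. pr u y" by standard (rule pr_add_left)
interpretation prj: additive "prj n" by standard (rule prj_add)

lemmas linear_simps [simp] =
  pr_add_right pr_scale_right pr_add_left pr_scale_left prj_add prj_scale
  pr_right.zero pr_right.minus pr_right.diff pr_right.sum
  pr_left.zero pr_left.minus pr_left.diff pr_left.sum
  prj.zero prj.minus prj.diff prj.sum

lemma preLie_deg0:
  "y \<in> hdeg 0 \<Longrightarrow> z \<in> hdeg q \<Longrightarrow> pr (pr x y) z - pr x (pr y z) = pr (pr x z) y - pr x (pr z y)"
  using preLie[of y 0 z q x] by (simp add: sgn_deg_def)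

lemma hdeg_diff: "x \<in> hdeg k \<Longrightarrow> y \<in> hdeg k \<Longrightarrow> x - y \<in> hdeg k"
  using hdeg_subspace[of k] by (simp add: subspace_diff)

lemma hdeg_minus: "x \<in> hdeg k \<Longrightarrow> - x \<in> hdeg k"
  using hdeg_subspace[of k] by (simp add: subspace_neg)

lemma hdeg_scale: "x \<in> hdeg k \<Longrightarrow> scale c x \<in> hdeg k"
  using hdeg_subspace[of k] by (simp add: subspace_scale)

lemma pr_hdeg0_left: "x \<in> hdeg 0 \<Longrightarrow> y \<in> hdeg k \<Longrightarrow> pr x y \<in> hdeg k"
  using pr_hdeg[of x 0 y k] by simp

lemma pr_hdeg0_right: "x \<in> hdeg k \<Longrightarrow> y \<in> hdeg 0 \<Longrightarrow> pr x y \<in> hdeg k"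
  using pr_hdeg[of x k y 0] by simp

subsection \<open>The weight filtration\<close>

definition eq_upto :: "nat \<Rightarrow> 'a \<Rightarrow> 'a \<Rightarrow> bool" where
  "eq_upto M x y \<longleftrightarrow> (\<forall>j\<le>M. prj j x = prj j y)"

definition wt_ge :: "nat \<Rightarrow> 'a \<Rightarrow> bool" where
  "wt_ge r x \<longleftrightarrow> (\<forall>j<r. prj j x = 0)"

lemma eq_upto_refl [simp]: "eq_upto M x x"
  and eq_upto_trans: "eq_upto M x y \<Longrightarrow> eq_upto M y z \<Longrightarrow> eq_upto M x z"
  and eq_upto_add: "eq_upto M x x' \<Longrightarrow> eq_upto M y y' \<Longrightarrow> eq_upto M (x + y) (x' + y')"
  and eq_upto_diff: "eq_upto M x x' \<Longrightarrow> eq_upto M y y' \<Longrightarrow> eq_upto M (x - y) (x' - y')"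
  and eq_upto_scale: "eq_upto M x x' \<Longrightarrow> eq_upto M (scale c x) (scale c x')"
  and eq_upto_sum: "(\<And>a. a \<in> A \<Longrightarrow> eq_upto M (f a) (g a)) \<Longrightarrow> eq_upto M (sum f A) (sum g A)"
  and eq_upto_0_iff: "eq_upto M x 0 \<longleftrightarrow> wt_ge (Suc M) x"
  by (auto simp: eq_upto_def wt_ge_def)

lemmas [trans] = eq_upto_trans

lemma eq_upto_pr: "eq_upto M x x' \<Longrightarrow> eq_upto M y y' \<Longrightarrow> eq_upto M (pr x y) (pr x' y')"
  unfolding eq_upto_def prj_pr by (intro allI impI sum.cong refl) auto

lemma wt_ge_0 [simp]: "wt_ge 0 x"
  and wt_ge_mono: "wt_ge r x \<Longrightarrow> s \<le> r \<Longrightarrow> wt_ge s x"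
  and wt_ge_diff: "wt_ge r x \<Longrightarrow> wt_ge r y \<Longrightarrow> wt_ge r (x - y)"
  and wt_ge_minus: "wt_ge r x \<Longrightarrow> wt_ge r (- x)"
  and wt_ge_scale: "wt_ge r x \<Longrightarrow> wt_ge r (scale c x)"
  and wt_ge_sum: "(\<And>a. a \<in> A \<Longrightarrow> wt_ge r (f a)) \<Longrightarrow> wt_ge r (sum f A)"
  by (auto simp: wt_ge_def)

lemma wt_ge_pr: "wt_ge r x \<Longrightarrow> wt_ge s y \<Longrightarrow> wt_ge (r + s) (pr x y)"
  unfolding wt_ge_def prj_pr
proof (intro allI impI sum.neutral ballI)
  fix j i assume x: "\<forall>j<r. prj j x = 0" and y: "\<forall>j<s. prj j y = 0"
    and "j < r + s" "i \<in> {..j}"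
  then have "i < r \<or> j - i < s" by auto
  then show "pr (prj i x) (prj (j - i) y) = 0" using x y by auto
qed

subsection \<open>Series converging in the weight topology\<close>

lemma prj_sum_atMost_stable:
  assumes F: "\<And>n. wt_ge n (F n)" and "j \<le> M"
  shows "prj j (\<Sum>n\<le>M. F n) = prj j (\<Sum>n\<le>j. F n)"
proof -
  have split: "{..M} = {..j} \<union> {j<..M}" using \<open>j \<le> M\<close> by auto
  have "(\<Sum>n\<le>M. F n) = (\<Sum>n\<le>j. F n) + (\<Sum>n\<in>{j<..M}. F n)"
    unfolding split by (rule sum.union_disjoint) auto
  moreover have "prj j (F n) = 0" if "j < n" for n
    using F[of n] that by (simp add: wt_ge_def)
  ultimately show ?thesis by simp
qed

lemma wsums_iff:
  assumes F: "\<And>n. wt_ge n (F n)"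
  shows "wsums prj F L \<longleftrightarrow> (\<forall>m. prj m L = prj m (\<Sum>n\<le>m. F n))"
proof -
  have partial: "prj m (\<Sum>n<K. F n) = prj m (\<Sum>n\<le>m. F n)" if "m < K" for m K
  proof -
    have "{..<K} = {..K - 1}" using that by auto
    then show ?thesis using prj_sum_atMost_stable[OF F, of m "K - 1"] that by (simp only:)
  qed
  show ?thesis
  proof
    assume "wsums prj F L"
    show "\<forall>m. prj m L = prj m (\<Sum>n\<le>m. F n)"
    proof
      fix m
      obtain N where "\<forall>K\<ge>N. prj m (\<Sum>n<K. F n) = prj m L"
        using \<open>wsums prj F L\<close> unfolding wsums_def by blast
      then have "prj m L = prj m (\<Sum>n<max N (Suc m). F n)" by simp
      then show "prj m L = prj m (\<Sum>n\<le>m. F n)" by (simp only: partial)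
    qed
  next
    assume L: "\<forall>m. prj m L = prj m (\<Sum>n\<le>m. F n)"
    show "wsums prj F L"
      unfolding wsums_def
    proof
      fix m
      have "prj m (\<Sum>n<K. F n) = prj m L" if "Suc m \<le> K" for K
        using partial[of m K] L that by (simp del: prj.sum)
      then show "\<exists>N. \<forall>K\<ge>N. prj m (\<Sum>n<K. F n) = prj m L" by blast
    qed
  qed
qed

lemma wsums_unique:
  assumes F: "\<And>n. wt_ge n (F n)"
  shows "\<exists>!L. wsums prj F L"
proof -
  obtain L where L: "\<forall>m. prj m L = prj m (\<Sum>n\<le>m. F n)"
    using prj_surj[of "\<lambda>m. prj m (\<Sum>n\<le>m. F n)"] prj_in_wt by blast
  show ?thesis
  proof (rule ex1I[of _ L])
    show "wsums prj F L" using L by (simp add: wsums_iff[OF F])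
    show "L' = L" if "wsums prj F L'" for L'
      using that L unfolding wsums_iff[OF F] by (metis prj_ext)
  qed
qed

lemma the_wsums_eq_upto:
  assumes F: "\<And>n. wt_ge n (F n)"
  shows "eq_upto M (THE L. wsums prj F L) (\<Sum>n\<le>M. F n)"
proof -
  have "wsums prj F (THE L. wsums prj F L)" by (rule theI'[OF wsums_unique[OF F]])
  then have "prj j (THE L. wsums prj F L) = prj j (\<Sum>n\<le>j. F n)" for j
    by (simp only: wsums_iff[OF F])
  then show ?thesis
    unfolding eq_upto_def by (metis prj_sum_atMost_stable[OF F])
qed

subsection \<open>Symmetric braces\<close>

lemma brace_cong: "(\<And>i. i < n \<Longrightarrow> f i = g i) \<Longrightarrow> brace pr n a f = brace pr n a g"
proof (induction n arbitrary: f g)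
  case (Suc n)
  have "brace pr n a f = brace pr n a g" "f n = g n"
    by (rule Suc.IH) (simp_all add: Suc.prems)
  moreover have "brace pr n a (f(i := pr (f i) (g n))) = brace pr n a (g(i := pr (g i) (g n)))" for i
    by (rule Suc.IH) (simp add: Suc.prems)
  ultimately show ?case by simp
qed simp

lemma brace_Suc_upd_last:
  "brace pr (Suc n) a (f(n := v)) = pr (brace pr n a f) v - (\<Sum>j<n. brace pr n a (f(j := pr (f j) v)))"
proof -
  have "brace pr n a (f(n := v)) = brace pr n a f"
    by (rule brace_cong) simp
  moreover have "brace pr n a ((f(n := v))(j := pr ((f(n := v)) j) v)) = brace pr n a (f(j := pr (f j) v))"
    if "j < n" for j
    by (rule brace_cong) (use that in auto)
  ultimately show ?thesis by simp
qed

lemma brace_linear_arg: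
  assumes "i < n"
  shows "brace pr n a (f(i := scale c x + scale e y)) =
         scale c (brace pr n a (f(i := x))) + scale e (brace pr n a (f(i := y)))"
  using assms
proof (induction n arbitrary: f i c e x y)
  case (Suc n)
  have combine: "scale c A + scale e B - (\<Sum>j\<in>J. scale c (u j) + scale e (v j))
      = scale c (A - sum u J) + scale e (B - sum v J)" for A B J u v
    by (simp add: sum.distrib scale_sum_right algebra_simps)
  show ?case
  proof (cases "i = n")
    case True
    have "brace pr n a (f(j := pr (f j) (scale c x + scale e y)))
        = scale c (brace pr n a (f(j := pr (f j) x))) + scale e (brace pr n a (f(j := pr (f j) y)))"
      if "j < n" for j
      using Suc.IH[OF that, of f c "pr (f j) x" e "pr (f j) y"] by (simp only: pr_add_right pr_scale_right)
    then show ?thesis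
      unfolding True brace_Suc_upd_last by (simp add: combine)
  next
    case False
    then have i: "i < n" using Suc.prems by simp
    let ?g = "\<lambda>z j. if j = i then brace pr n a (f(i := pr z (f n)))
                     else brace pr n a ((f(j := pr (f j) (f n)))(i := z))"
    have unfold: "brace pr (Suc n) a (f(i := z)) = pr (brace pr n a (f(i := z))) (f n) - (\<Sum>j<n. ?g z j)"
      for z
    proof -
      have "brace pr n a ((f(i := z))(j := pr ((f(i := z)) j) (f n))) = ?g z j" for j
        by (cases "j = i") (simp_all add: fun_upd_twist)
      then show ?thesis using i by simp
    qed
    have "?g (scale c x + scale e y) j = scale c (?g x j) + scale e (?g y j)" for j
      using Suc.IH[OF i, of f c "pr x (f n)" e "pr y (f n)"]
        Suc.IH[OF i, of "f(j := pr (f j) (f n))" c x e y]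
      by (cases "j = i") (simp_all del: fun_upd_apply)
    then show ?thesis
      unfolding unfold Suc.IH[OF i] by (simp add: combine del: fun_upd_apply)
  qed
qed simp

lemma brace_add_arg:
  "i < n \<Longrightarrow> brace pr n a (f(i := x + y)) = brace pr n a (f(i := x)) + brace pr n a (f(i := y))"
  using brace_linear_arg[of i n a f 1 x 1 y] by simp

lemma brace_scale_arg:
  "i < n \<Longrightarrow> brace pr n a (f(i := scale c x)) = scale c (brace pr n a (f(i := x)))"
  using brace_linear_arg[of i n a f c x 0 x] by simp

lemma brace_sum_arg:
  assumes "i < n"
  shows "brace pr n a (f(i := (\<Sum>k\<in>K. w k))) = (\<Sum>k\<in>K. brace pr n a (f(i := w k)))"
proof (induction K rule: infinite_finite_induct)
  case (infinite K)
  then show ?case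
    using brace_scale_arg[OF assms, of a f 0 0] by (simp del: fun_upd_apply)
next
  case empty
  then show ?case
    using brace_scale_arg[OF assms, of a f 0 0] by (simp del: fun_upd_apply)
next
  case (insert k K)
  then show ?case by (simp add: brace_add_arg[OF assms] del: fun_upd_apply)
qed

lemma brace_wt_ge:
  "(\<And>i. i < n \<Longrightarrow> wt_ge (r i) (f i)) \<Longrightarrow> wt_ge s a \<Longrightarrow> wt_ge (s + (\<Sum>i<n. r i)) (brace pr n a f)"
proof (induction n arbitrary: f r)
  case (Suc n)
  have "wt_ge (s + (\<Sum>i<n. r i) + r n) (pr (brace pr n a f) (f n))"
    by (intro wt_ge_pr Suc.IH) (use Suc.prems in auto)
  moreover have "wt_ge (s + (\<Sum>i<n. r i) + r n) (brace pr n a (f(i := pr (f i) (f n))))"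
    if i: "i < n" for i
  proof -
    have "(\<Sum>j<n. (r(i := r i + r n)) j) = (\<Sum>j<n. r j) + r n"
      using i by (simp add: sum.If_cases Diff_eq[symmetric] sum.remove)
    moreover have "wt_ge (s + (\<Sum>j<n. (r(i := r i + r n)) j)) (brace pr n a (f(i := pr (f i) (f n))))"
      by (intro Suc.IH) (use Suc.prems in \<open>auto intro: wt_ge_pr\<close>)
    ultimately show ?thesis by (simp add: add.assoc)
  qed
  ultimately show ?case by (auto intro!: wt_ge_diff wt_ge_sum simp: add.assoc)
qed simp

lemma brace_eq_upto:
  "eq_upto M a a' \<Longrightarrow> (\<And>i. eq_upto M (f i) (f' i)) \<Longrightarrow> eq_upto M (brace pr n a f) (brace pr n a' f')"
proof (induction n arbitrary: f f')
  case (Suc n)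
  have "eq_upto M (brace pr n a (f(i := pr (f i) (f n)))) (brace pr n a' (f'(i := pr (f' i) (f' n))))" for i
    by (rule Suc.IH) (simp_all add: Suc.prems eq_upto_pr)
  then show ?case by (auto intro!: eq_upto_diff eq_upto_pr eq_upto_sum Suc.IH Suc.prems)
qed simp

lemma brace_expand_prefix:
  assumes "j \<le> n" "finite K"
  shows "brace pr n a (\<lambda>i. if i < j then (\<Sum>k\<in>K. w k) else f i)
     = (\<Sum>g\<in>PiE {..<j} (\<lambda>_. K). brace pr n a (\<lambda>i. if i < j then w (g i) else f i))"
  using assms(1)
proof (induction j arbitrary: f)
  case (Suc j)
  let ?T = "\<Sum>k\<in>K. w k"
  have j: "j < n" using Suc.prems by simp
  have "brace pr n a (\<lambda>i. if i < Suc j then ?T else f i)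
      = brace pr n a (\<lambda>i. if i < j then ?T else (f(j := ?T)) i)"
    by (rule brace_cong) simp
  also have "\<dots> = (\<Sum>g\<in>PiE {..<j} (\<lambda>_. K). brace pr n a (\<lambda>i. if i < j then w (g i) else (f(j := ?T)) i))"
    using Suc by simp
  also have "\<dots> = (\<Sum>g\<in>PiE {..<j} (\<lambda>_. K). \<Sum>k\<in>K.
                   brace pr n a (\<lambda>i. if i < Suc j then w ((g(j := k)) i) else f i))"
  proof (rule sum.cong[OF refl])
    fix g
    have "(\<lambda>i. if i < j then w (g i) else (f(j := u)) i) = (\<lambda>i. if i < j then w (g i) else f i)(j := u)"
      for u by (auto simp: fun_eq_iff)
    moreover have "(\<lambda>i. if i < j then w (g i) else f i)(j := w k)
        = (\<lambda>i. if i < Suc j then w ((g(j := k)) i) else f i)" for k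
      by (auto simp: fun_eq_iff)
    ultimately show "brace pr n a (\<lambda>i. if i < j then w (g i) else (f(j := ?T)) i)
        = (\<Sum>k\<in>K. brace pr n a (\<lambda>i. if i < Suc j then w ((g(j := k)) i) else f i))"
      by (simp only: brace_sum_arg[OF j])
  qed
  also have "\<dots> = (\<Sum>(k, g)\<in>K \<times> PiE {..<j} (\<lambda>_. K).
                   brace pr n a (\<lambda>i. if i < Suc j then w ((g(j := k)) i) else f i))"
    by (subst sum.swap) (rule sum.cartesian_product)
  also have "\<dots> = (\<Sum>h\<in>(\<lambda>(k, g). g(j := k)) ` (K \<times> PiE {..<j} (\<lambda>_. K)).
                   brace pr n a (\<lambda>i. if i < Suc j then w (h i) else f i))"
    by (subst sum.reindex[OF inj_combinator]) (simp_all add: split_def)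
  also have "(\<lambda>(k, g). g(j := k)) ` (K \<times> PiE {..<j} (\<lambda>_. K)) = PiE {..<Suc j} (\<lambda>_. K)"
    unfolding lessThan_Suc by (rule PiE_insert_eq[symmetric])
  finally show ?case .
qed simp

lemma brace_expand:
  assumes "finite K"
  shows "brace pr n a (\<lambda>_. \<Sum>k\<in>K. w k) = (\<Sum>g\<in>PiE {..<n} (\<lambda>_. K). brace pr n a (\<lambda>i. w (g i)))"
proof -
  have "brace pr n a (\<lambda>_. \<Sum>k\<in>K. w k) = brace pr n a (\<lambda>i. if i < n then \<Sum>k\<in>K. w k else 0)"
    by (rule brace_cong) simp
  also have "\<dots> = (\<Sum>g\<in>PiE {..<n} (\<lambda>_. K). brace pr n a (\<lambda>i. if i < n then w (g i) else 0))"
    by (rule brace_expand_prefix[OF le_refl assms])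
  also have "\<dots> = (\<Sum>g\<in>PiE {..<n} (\<lambda>_. K). brace pr n a (\<lambda>i. w (g i)))"
    by (intro sum.cong refl brace_cong) simp
  finally show ?thesis .
qed

text \<open>The expansion of {a; f 0, \<dots>, f (m - 1), x, y} by two applications of the brace recursion.\<close>

definition brace_last2 :: "nat \<Rightarrow> 'a \<Rightarrow> (nat \<Rightarrow> 'a) \<Rightarrow> 'a \<Rightarrow> 'a \<Rightarrow> 'a" where
  "brace_last2 m a f x y =
    (pr (pr (brace pr m a f) x) y - pr (brace pr m a f) (pr x y))
    - (\<Sum>j<m. pr (brace pr m a (f(j := pr (f j) x))) y)
    - (\<Sum>j<m. pr (brace pr m a (f(j := pr (f j) y))) x)
    + (\<Sum>i<m. brace pr m a (f(i := pr (pr (f i) y) x + pr (f i) (pr x y))))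
    + (\<Sum>i<m. \<Sum>j\<in>{..<m} - {i}. brace pr m a (f(i := pr (f i) y, j := pr (f j) x)))"

lemma brace_Suc_upd_last_remove:
  assumes "i < m"
  shows "brace pr (Suc m) a (g(m := x)) = pr (brace pr m a g) x
           - (brace pr m a (g(i := pr (g i) x)) + (\<Sum>j\<in>{..<m} - {i}. brace pr m a (g(j := pr (g j) x))))"
  unfolding brace_Suc_upd_last using assms by (simp add: sum.remove del: fun_upd_apply)

lemma brace_last2_eq: "brace pr (Suc (Suc m)) a (f(m := x, Suc m := y)) = brace_last2 m a f x y"
proof -
  let ?B = "\<lambda>j u. brace pr m a (f(j := u))"
  have inner: "brace pr (Suc m) a ((f(m := x))(i := pr ((f(m := x)) i) y)) =
      pr (?B i (pr (f i) y)) x - (?B i (pr (pr (f i) y) x)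
        + (\<Sum>j\<in>{..<m} - {i}. brace pr m a (f(i := pr (f i) y, j := pr (f j) x))))"
    if i: "i < m" for i
  proof -
    have upd: "(f(m := x))(i := pr ((f(m := x)) i) y) = (f(i := pr (f i) y))(m := x)"
      using i by (auto simp: fun_upd_twist)
    have "(\<Sum>j\<in>{..<m} - {i}. brace pr m a ((f(i := pr (f i) y))(j := pr ((f(i := pr (f i) y)) j) x)))
        = (\<Sum>j\<in>{..<m} - {i}. brace pr m a (f(i := pr (f i) y, j := pr (f j) x)))"
      by (rule sum.cong) auto
    then show ?thesis unfolding upd brace_Suc_upd_last_remove[OF i] by simp
  qed
  have last: "brace pr (Suc m) a ((f(m := x))(m := pr ((f(m := x)) m) y))
      = pr (brace pr m a f) (pr x y) - (\<Sum>j<m. ?B j (pr (f j) (pr x y)))"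
    using brace_Suc_upd_last[of m a f "pr x y"] by simp
  have split: "(\<Sum>i<m. ?B i (pr (pr (f i) y) x + pr (f i) (pr x y)))
      = (\<Sum>i<m. ?B i (pr (pr (f i) y) x)) + (\<Sum>i<m. ?B i (pr (f i) (pr x y)))"
    by (simp add: brace_add_arg sum.distrib del: fun_upd_apply)
  have "brace pr (Suc (Suc m)) a (f(m := x, Suc m := y)) = pr (brace pr (Suc m) a (f(m := x))) y
      - (\<Sum>i<Suc m. brace pr (Suc m) a ((f(m := x))(i := pr ((f(m := x)) i) y)))"
    by (rule brace_Suc_upd_last)
  also have "\<dots> = pr (pr (brace pr m a f) x - (\<Sum>j<m. ?B j (pr (f j) x))) y
      - ((\<Sum>i<m. pr (?B i (pr (f i) y)) x - (?B i (pr (pr (f i) y) x)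
          + (\<Sum>j\<in>{..<m} - {i}. brace pr m a (f(i := pr (f i) y, j := pr (f j) x)))))
         + (pr (brace pr m a f) (pr x y) - (\<Sum>j<m. ?B j (pr (f j) (pr x y)))))"
    unfolding sum.lessThan_Suc brace_Suc_upd_last[of m a f x] last
    by (intro arg_cong2[where f = "(-)"] arg_cong2[where f = "(+)"] sum.cong refl inner) simp
  also have "\<dots> = brace_last2 m a f x y"
    unfolding brace_last2_def split by (simp add: sum.distrib sum_subtractf algebra_simps)
  finally show ?thesis .
qed

lemma brace_last2_sym:
  assumes f: "\<And>k. f k \<in> hdeg 0" and x: "x \<in> hdeg 0" and y: "y \<in> hdeg 0"
  shows "brace_last2 m a f x y = brace_last2 m a f y x"
proof -
  have "pr (pr (f i) y) x + pr (f i) (pr x y) = pr (pr (f i) x) y + pr (f i) (pr y x)" for i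
    using preLie_deg0[OF y x, of "f i"] by (simp add: algebra_simps)
  moreover have "(\<Sum>i<m. \<Sum>j\<in>{..<m} - {i}. brace pr m a (f(i := pr (f i) y, j := pr (f j) x)))
     = (\<Sum>i<m. \<Sum>j\<in>{..<m} - {i}. brace pr m a (f(i := pr (f i) x, j := pr (f j) y)))"
    by (subst sum_offdiag_swap) (auto intro!: sum.cong simp: fun_upd_twist)
  ultimately show ?thesis
    unfolding brace_last2_def preLie_deg0[OF x y] by (simp add: algebra_simps)
qed

lemma brace_transpose_last2:
  assumes "\<And>k. f k \<in> hdeg 0"
  shows "brace pr (Suc (Suc m)) a (f \<circ> transpose m (Suc m)) = brace pr (Suc (Suc m)) a f"
proof -
  have "f \<circ> transpose m (Suc m) = f(m := f (Suc m), Suc m := f m)"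
    by (auto simp: fun_eq_iff transpose_def)
  moreover have "f = f(m := f m, Suc m := f (Suc m))" by simp
  ultimately show ?thesis
    by (metis brace_last2_eq brace_last2_sym assms)
qed

lemma brace_transpose_lift:
  assumes ij: "i < n" "j < n"
    and sym: "\<And>g. (\<And>k. g k \<in> hdeg 0) \<Longrightarrow> brace pr n a (g \<circ> transpose i j) = brace pr n a g"
    and f: "\<And>k. f k \<in> hdeg 0"
  shows "brace pr (Suc n) a (f \<circ> transpose i j) = brace pr (Suc n) a f"
proof -
  let ?t = "transpose i j"
  let ?G = "\<lambda>k. brace pr n a (f(k := pr (f k) (f n)))"
  have tn: "?t n = n" using ij by simp
  have "brace pr n a ((f \<circ> ?t)(l := pr ((f \<circ> ?t) l) (f n))) = ?G (?t l)" for l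
  proof -
    have "(f \<circ> ?t)(l := pr ((f \<circ> ?t) l) (f n)) = (f(?t l := pr (f (?t l)) (f n))) \<circ> ?t"
      by (auto simp: fun_eq_iff transpose_eq_iff)
    then show ?thesis by (simp add: sym f pr_hdeg0_left)
  qed
  then have "(\<Sum>l<n. brace pr n a ((f \<circ> ?t)(l := pr ((f \<circ> ?t) l) (f n)))) = (\<Sum>l<n. ?G l)"
    using sum.reindex_bij_betw[of ?t "{..<n}" "{..<n}" ?G] ij by simp
  then show ?thesis using tn by (simp add: sym[OF f])
qed

lemma brace_transpose_Suc_last:
  assumes sym: "\<And>i j g. i < n \<Longrightarrow> j < n \<Longrightarrow> (\<And>k. g k \<in> hdeg 0) \<Longrightarrow>
                  brace pr n a (g \<circ> transpose i j) = brace pr n a g"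
    and i: "i < n" and g: "\<And>k. g k \<in> hdeg 0"
  shows "brace pr (Suc n) a (g \<circ> transpose i n) = brace pr (Suc n) a g"
proof -
  have lift: "brace pr (Suc n) a (h \<circ> transpose i' j') = brace pr (Suc n) a h"
    if "i' < n" "j' < n" "\<And>k. h k \<in> hdeg 0" for i' j' h
    by (rule brace_transpose_lift) (use that sym in auto)
  obtain m where n: "n = Suc m" using i by (cases n) auto
  show ?thesis
  proof (cases "i = m")
    case True
    then show ?thesis using brace_transpose_last2[OF g] n by simp
  next
    case False
    then have "i < m" using i n by simp
    let ?t = "transpose i m"
    have "brace pr (Suc n) a (g \<circ> transpose i n) = brace pr (Suc n) a (((g \<circ> ?t) \<circ> transpose m n) \<circ> ?t)"
      using n \<open>i < m\<close> transpose_comp_triple[of i n m] by (simp add: comp_assoc)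
    also have "\<dots> = brace pr (Suc n) a ((g \<circ> ?t) \<circ> transpose m n)"
      by (rule lift) (use \<open>i < m\<close> n g in auto)
    also have "\<dots> = brace pr (Suc n) a (g \<circ> ?t)"
      unfolding n by (rule brace_transpose_last2) (simp add: g)
    also have "\<dots> = brace pr (Suc n) a g"
      by (rule lift) (use \<open>i < m\<close> n g in auto)
    finally show ?thesis .
  qed
qed

lemma brace_transpose:
  assumes "i < n" "j < n" "\<And>k. f k \<in> hdeg 0"
  shows "brace pr n a (f \<circ> transpose i j) = brace pr n a f"
  using assms
proof (induction n arbitrary: i j f)
  case (Suc n)
  have IH: "brace pr n a (g \<circ> transpose i' j') = brace pr n a g"
    if "i' < n" "j' < n" "\<And>k. g k \<in> hdeg 0" for i' j' g
    using Suc.IH[OF that] by (simp add: comp_def)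
  consider "i < n" "j < n" | "i = j" | "i < n" "j = n" | "j < n" "i = n"
    using Suc.prems by linarith
  then show ?case
  proof cases
    case 1
    then show ?thesis by (intro brace_transpose_lift[OF 1 IH[OF 1] Suc.prems(3)])
  next
    case 2
    then show ?thesis by (simp only: transpose_same comp_id)
  next
    case 3
    show ?thesis unfolding \<open>j = n\<close> by (rule brace_transpose_Suc_last[OF IH 3(1) Suc.prems(3)])
  next
    case 4
    show ?thesis unfolding \<open>i = n\<close> transpose_commute[of n j]
      by (rule brace_transpose_Suc_last[OF IH 4(1) Suc.prems(3)])
  qed
qed simp

subsection \<open>The circle product with a pre-Lie exponential\<close>

lemma ppow_Suc: "ppow pr one l (Suc n) = pr (ppow pr one l n) l"
  by (cases n) (simp_all add: pr_one_left)

lemma ppow_hdeg: "l \<in> hdeg 0 \<Longrightarrow> ppow pr one l n \<in> hdeg 0"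
  by (induction n) (simp_all add: one_hdeg ppow_Suc pr_hdeg0_left del: ppow.simps(2))

lemma ppow_wt_ge: "wt_ge 1 l \<Longrightarrow> wt_ge n (ppow pr one l n)"
proof (induction n)
  case (Suc n)
  then show ?case using wt_ge_pr[of n _ 1 l] by (simp add: ppow_Suc del: ppow.simps(2))
qed simp

definition pexp_term :: "'a \<Rightarrow> nat \<Rightarrow> 'a" where
  "pexp_term l k = scale (1 / fact k) (ppow pr one l k)"

lemma pexp_term_0 [simp]: "pexp_term l 0 = one"
  and pexp_term_1 [simp]: "pexp_term l (Suc 0) = l"
  by (simp_all add: pexp_term_def)

lemma pr_pexp_term: "pr (pexp_term l k) l = scale (of_nat (Suc k)) (pexp_term l (Suc k))"
proof -
  have "(1 / fact k :: 'k) = of_nat (Suc k) * (1 / fact (Suc k))"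
    by (simp add: divide_simps del: of_nat_Suc)
  then show ?thesis by (simp add: pexp_term_def ppow_Suc del: ppow.simps)
qed

lemma pexp_term_hdeg: "l \<in> hdeg 0 \<Longrightarrow> pexp_term l k \<in> hdeg 0"
  by (simp add: pexp_term_def ppow_hdeg hdeg_scale del: ppow.simps)

lemma pexp_term_wt_ge: "wt_ge 1 l \<Longrightarrow> wt_ge k (pexp_term l k)"
  by (simp add: pexp_term_def ppow_wt_ge wt_ge_scale del: ppow.simps)

lemma pexp_eq_upto:
  assumes "wt_ge 1 l"
  shows "eq_upto M (pexp scale pr one prj l) (\<Sum>k\<le>M. pexp_term l k)"
proof -
  have "(\<lambda>n. scale (1 / fact n) (ppow pr one l n)) = pexp_term l"
    by (simp add: fun_eq_iff pexp_term_def)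
  then show ?thesis
    unfolding pexp_def using assms by (simp add: the_wsums_eq_upto pexp_term_wt_ge)
qed

definition brace_terms :: "'a \<Rightarrow> nat \<Rightarrow> 'a \<Rightarrow> (nat \<Rightarrow> nat) \<Rightarrow> 'a" where
  "brace_terms l n a g = brace pr n a (\<lambda>i. pexp_term l (g i))"

text \<open>The part of a \<circledcirc> e^l that is homogeneous of degree N in l.\<close>

definition circ_part :: "'a \<Rightarrow> nat \<Rightarrow> 'a \<Rightarrow> 'a" where
  "circ_part l N a = (\<Sum>n\<le>N. scale (1 / fact n) (\<Sum>g\<in>compositions n N. brace_terms l n a g))"

lemma scale_sum_brace_terms_by_parts:
  "(\<Sum>g\<in>compositions n (Suc N). scale (of_nat (Suc N)) (brace_terms l n a g)) =
   (\<Sum>i<n. \<Sum>g\<in>{g\<in>compositions n (Suc N). g i = 1}. brace_terms l n a g)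
   + (\<Sum>i<n. \<Sum>g\<in>{g\<in>compositions n (Suc N). g i \<noteq> 1}. scale (of_nat (g i)) (brace_terms l n a g))"
proof -
  have "scale (of_nat (Suc N)) (brace_terms l n a g) = (\<Sum>i<n. scale (of_nat (g i)) (brace_terms l n a g))"
    if "g \<in> compositions n (Suc N)" for g
  proof -
    have "(of_nat (Suc N) :: 'k) = (\<Sum>i<n. of_nat (g i))"
      using that by (simp add: compositions_iff flip: of_nat_sum)
    then show ?thesis by (simp add: scale_sum_left)
  qed
  then have "(\<Sum>g\<in>compositions n (Suc N). scale (of_nat (Suc N)) (brace_terms l n a g))
      = (\<Sum>i<n. \<Sum>g\<in>compositions n (Suc N). scale (of_nat (g i)) (brace_terms l n a g))"
    by (simp add: sum.swap[of _ "{..<n}"])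
  also have "\<dots> = (\<Sum>i<n. (\<Sum>g\<in>{g\<in>compositions n (Suc N). g i = 1}. scale (of_nat (g i)) (brace_terms l n a g))
      + (\<Sum>g\<in>{g\<in>compositions n (Suc N). g i \<noteq> 1}. scale (of_nat (g i)) (brace_terms l n a g)))"
    by (intro sum.cong refl)
      (auto simp: sum.inter_filter[OF finite_compositions] simp flip: sum.distrib intro!: sum.cong)
  finally show ?thesis by (simp add: sum.distrib)
qed

lemma sum_brace_terms_incr:
  assumes "i < n"
  shows "(\<Sum>g\<in>{g\<in>compositions n (Suc N). g i \<noteq> 1}. scale (of_nat (g i)) (brace_terms l n a g))
       = (\<Sum>g\<in>compositions n N. scale (of_nat (Suc (g i))) (brace_terms l n a (g(i := Suc (g i)))))"
  using sum.reindex_bij_betw[OF bij_betw_compositions_incr[OF assms],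
      of "\<lambda>g. scale (of_nat (g i)) (brace_terms l n a g)"]
  by simp

lemma sum_brace_terms_unit:
  assumes "i < Suc m" and l: "l \<in> hdeg 0"
  shows "(\<Sum>g\<in>{g\<in>compositions (Suc m) (Suc N). g i = 1}. brace_terms l (Suc m) a g)
       = (\<Sum>g\<in>compositions m N. brace pr (Suc m) a ((\<lambda>j. pexp_term l (g j))(m := l)))"
proof -
  let ?t = "transpose i m"
  let ?C = "\<lambda>k. {g\<in>compositions (Suc m) (Suc N). g k = 1}"
  have "g \<circ> ?t \<in> ?C i" if "g \<in> ?C m" for g
    using that compositions_comp_transpose[of g "Suc m" "Suc N" i m] assms(1) by auto
  moreover have "g \<circ> ?t \<in> ?C m" if "g \<in> ?C i" for g
    using that compositions_comp_transpose[of g "Suc m" "Suc N" i m] assms(1) by auto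
  ultimately have "bij_betw (\<lambda>g. g \<circ> ?t) (?C m) (?C i)"
    by (intro bij_betwI[where g = "\<lambda>g. g \<circ> ?t"]) (auto simp: comp_assoc)
  then have "(\<Sum>g\<in>?C i. brace_terms l (Suc m) a g) = (\<Sum>g\<in>?C m. brace_terms l (Suc m) a (g \<circ> ?t))"
    by (rule sum.reindex_bij_betw[symmetric])
  also have "\<dots> = (\<Sum>g\<in>?C m. brace_terms l (Suc m) a g)"
  proof (rule sum.cong[OF refl])
    fix g
    show "brace_terms l (Suc m) a (g \<circ> ?t) = brace_terms l (Suc m) a g"
      using brace_transpose[of i "Suc m" m "\<lambda>j. pexp_term l (g j)" a] assms
      by (simp add: brace_terms_def pexp_term_hdeg comp_def)
  qed
  also have "\<dots> = (\<Sum>g\<in>compositions m N. brace_terms l (Suc m) a (g(m := 1)))"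
    by (rule sum.reindex_bij_betw[OF bij_betw_compositions_one_last, symmetric])
  also have "\<dots> = (\<Sum>g\<in>compositions m N. brace pr (Suc m) a ((\<lambda>j. pexp_term l (g j))(m := l)))"
    unfolding brace_terms_def
    by (intro sum.cong refl arg_cong[where f = "brace pr (Suc m) a"]) (simp add: fun_eq_iff)
  finally show ?thesis .
qed

lemma pr_brace_terms:
  "pr (brace_terms l n a g) l = brace pr (Suc n) a ((\<lambda>j. pexp_term l (g j))(n := l))
     + (\<Sum>i<n. scale (of_nat (Suc (g i))) (brace_terms l n a (g(i := Suc (g i)))))"
proof -
  let ?F = "\<lambda>j. pexp_term l (g j)"
  have "brace pr n a (?F(i := pr (?F i) l)) = scale (of_nat (Suc (g i))) (brace_terms l n a (g(i := Suc (g i))))"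
    if "i < n" for i
  proof -
    have "?F(i := pexp_term l (Suc (g i))) = (\<lambda>j. pexp_term l ((g(i := Suc (g i))) j))"
      by (simp add: fun_eq_iff)
    then show ?thesis
      by (simp add: pr_pexp_term brace_scale_arg[OF that] brace_terms_def del: fun_upd_apply)
  qed
  then show ?thesis
    using brace_Suc_upd_last[of n a ?F l] by (simp add: brace_terms_def)
qed

definition rmult :: "'a \<Rightarrow> 'a \<Rightarrow> 'a" where
  "rmult l x = pr x l"

lemma rmult_pow_add: "(rmult l ^^ n) (x + y) = (rmult l ^^ n) x + (rmult l ^^ n) y"
  and rmult_pow_scale: "(rmult l ^^ n) (scale c x) = scale c ((rmult l ^^ n) x)"
  by (induction n) (simp_all add: rmult_def)

interpretation rmult_pow: additive "rmult l ^^ n"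
  by standard (rule rmult_pow_add)

lemma rmult_pow_one: "(rmult l ^^ n) one = ppow pr one l n"
  by (induction n) (simp_all add: rmult_def ppow_Suc del: ppow.simps(2))

lemma rmult_pow_wt_ge: "wt_ge 1 l \<Longrightarrow> wt_ge r x \<Longrightarrow> wt_ge (r + n) ((rmult l ^^ n) x)"
proof (induction n)
  case (Suc n)
  then show ?case using wt_ge_pr[of "r + n" _ 1 l] by (simp add: rmult_def)
qed simp

lemma rmult_pow_eq_upto:
  "eq_upto M x y \<Longrightarrow> eq_upto M ((rmult l ^^ n) x) ((rmult l ^^ n) y)"
  by (induction n) (simp_all add: rmult_def eq_upto_pr)


lemma circ_part_Suc:
  assumes l: "l \<in> hdeg 0"
  shows "scale (of_nat (Suc N)) (circ_part l (Suc N) a) = pr (circ_part l N a) l"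
proof -
  define S where "S m = (\<Sum>g\<in>compositions m N. brace pr (Suc m) a ((\<lambda>j. pexp_term l (g j))(m := l)))" for m
  define X where "X n = (\<Sum>i<n. \<Sum>g\<in>compositions n N.
                           scale (of_nat (Suc (g i))) (brace_terms l n a (g(i := Suc (g i)))))" for n
  define Y where "Y n = (\<Sum>i<n. \<Sum>g\<in>{g\<in>compositions n (Suc N). g i = 1}. brace_terms l n a g)" for n
  have "scale (of_nat (Suc N)) (circ_part l (Suc N) a)
      = (\<Sum>n\<le>Suc N. scale (1 / fact n) (\<Sum>g\<in>compositions n (Suc N). scale (of_nat (Suc N)) (brace_terms l n a g)))"
    unfolding circ_part_def scale_sum_right by (intro sum.cong refl) (simp add: mult.commute)
  also have "\<dots> = (\<Sum>n\<le>Suc N. scale (1 / fact n) (Y n)) + (\<Sum>n\<le>Suc N. scale (1 / fact n) (X n))"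
  proof -
    have "(\<Sum>i<n. \<Sum>g\<in>{g\<in>compositions n (Suc N). g i \<noteq> 1}. scale (of_nat (g i)) (brace_terms l n a g))
        = X n" for n
      unfolding X_def by (intro sum.cong refl sum_brace_terms_incr) simp
    then show ?thesis
      unfolding scale_sum_brace_terms_by_parts Y_def[symmetric] scale_right_distrib sum.distrib by simp
  qed
  also have "(\<Sum>n\<le>Suc N. scale (1 / fact n) (Y n)) = (\<Sum>m\<le>N. scale (1 / fact m) (S m))"
  proof -
    have "Y (Suc m) = (\<Sum>i<Suc m. S m)" for m
      unfolding Y_def S_def by (intro sum.cong refl sum_brace_terms_unit[OF _ l]) simp
    then have "Y (Suc m) = scale (of_nat (Suc m)) (S m)" for m
      by (simp only: sum_constant_scale card_lessThan)
    then have "scale (1 / fact (Suc m)) (Y (Suc m)) = scale (1 / fact m) (S m)" for m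
      by (simp add: divide_simps del: of_nat_Suc)
    then show ?thesis by (simp add: sum.atMost_Suc_shift Y_def del: sum.atMost_Suc)
  qed
  also have "(\<Sum>n\<le>Suc N. scale (1 / fact n) (X n)) = (\<Sum>n\<le>N. scale (1 / fact n) (X n))"
    by (simp add: X_def compositions_empty)
  also have "(\<Sum>m\<le>N. scale (1 / fact m) (S m)) + (\<Sum>n\<le>N. scale (1 / fact n) (X n)) = pr (circ_part l N a) l"
    by (simp add: circ_part_def pr_brace_terms S_def X_def scale_right_distrib sum.distrib
        sum.swap[of _ "compositions _ N"])
  finally show ?thesis .
qed

lemma circ_part_eq_rmult_pow:
  "l \<in> hdeg 0 \<Longrightarrow> circ_part l N a = scale (1 / fact N) ((rmult l ^^ N) a)"
proof (induction N)
  case 0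
  then show ?case by (simp add: circ_part_def compositions_0_0 brace_terms_def)
next
  case (Suc N)
  have "circ_part l (Suc N) a = scale (1 / of_nat (Suc N)) (scale (of_nat (Suc N)) (circ_part l (Suc N) a))"
    by (simp del: of_nat_Suc)
  also have "\<dots> = scale (1 / of_nat (Suc N)) (pr (scale (1 / fact N) ((rmult l ^^ N) a)) l)"
    by (simp only: circ_part_Suc Suc)
  also have "\<dots> = scale (1 / fact (Suc N)) ((rmult l ^^ Suc N) a)"
    by (simp add: rmult_def divide_simps)
  finally show ?case .
qed

subsection \<open>Conjugation by the exponential of a degree zero element\<close>

lemma ad_hdeg: "l \<in> hdeg 0 \<Longrightarrow> z \<in> hdeg k \<Longrightarrow> (ad pr l ^^ n) z \<in> hdeg k"
  by (induction n) (simp_all add: ad_def hdeg_diff pr_hdeg0_left pr_hdeg0_right)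

lemma ad_wt_ge: "wt_ge 1 l \<Longrightarrow> wt_ge n ((ad pr l ^^ n) z)"
proof (induction n)
  case (Suc n)
  then show ?case
    using wt_ge_pr[of 1 l n] wt_ge_pr[of n _ 1 l] by (simp add: ad_def wt_ge_diff add.commute)
qed simp

lemma sum_binomial_pascal:
  "(\<Sum>p\<le>N. scale (of_nat (N choose p)) (v p)) + (\<Sum>p\<le>N. scale (of_nat (N choose p)) (v (Suc p)))
   = (\<Sum>p\<le>Suc N. scale (of_nat (Suc N choose p)) (v p))"
proof -
  have "(\<Sum>p\<le>N. scale (of_nat (N choose p)) (v p)) = (\<Sum>p\<le>Suc N. scale (of_nat (N choose p)) (v p))"
    by simp
  also have "\<dots> = v 0 + (\<Sum>p\<le>N. scale (of_nat (N choose Suc p)) (v (Suc p)))"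
    unfolding sum.atMost_Suc_shift by simp
  finally have "(\<Sum>p\<le>N. scale (of_nat (N choose p)) (v p))
      = v 0 + (\<Sum>p\<le>N. scale (of_nat (N choose Suc p)) (v (Suc p)))" .
  moreover have "(\<Sum>p\<le>Suc N. scale (of_nat (Suc N choose p)) (v p)) = v 0
      + ((\<Sum>p\<le>N. scale (of_nat (N choose p)) (v (Suc p))) + (\<Sum>p\<le>N. scale (of_nat (N choose Suc p)) (v (Suc p))))"
    unfolding sum.atMost_Suc_shift
    by (simp only: binomial_Suc_Suc of_nat_add scale_left_distrib sum.distrib) simp
  ultimately show ?thesis by (simp add: algebra_simps)
qed

lemma pr_ad_pow:
  assumes l: "l \<in> hdeg 0" and alpha: "alpha \<in> hdeg k"
  shows "pr y ((ad pr l ^^ N) alpha) = (\<Sum>p\<le>N. scale (of_nat (N choose p))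
           ((rmult (- l) ^^ p) (pr ((rmult l ^^ (N - p)) y) alpha)))"
proof (induction N arbitrary: y)
  case (Suc N)
  let ?z = "(ad pr l ^^ N) alpha"
  define v where "v p = (rmult (- l) ^^ p) (pr ((rmult l ^^ (Suc N - p)) y) alpha)" for p
  have "pr y (ad pr l ?z) = pr (rmult l y) ?z + rmult (- l) (pr y ?z)"
    using preLie_deg0[OF l ad_hdeg[OF l alpha], of y] by (simp add: ad_def rmult_def algebra_simps)
  moreover have "pr (rmult l y) ?z = (\<Sum>p\<le>N. scale (of_nat (N choose p)) (v p))"
    unfolding Suc.IH v_def
    by (intro sum.cong refl) (simp add: Suc_diff_le funpow_Suc_right del: funpow.simps)
  moreover have "rmult (- l) (pr y ?z) = (\<Sum>p\<le>N. scale (of_nat (N choose p)) (v (Suc p)))"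
    unfolding Suc.IH v_def by (simp add: rmult_def flip: sum_negf)
  ultimately show ?case
    unfolding v_def[symmetric] by (simp add: sum_binomial_pascal)
qed simp

lemma ad_pow_expansion:
  assumes l: "l \<in> hdeg 0" and alpha: "alpha \<in> hdeg k"
  shows "scale (1 / fact n) ((ad pr l ^^ n) alpha) =
    (\<Sum>p\<le>n. scale (1 / fact p) ((rmult (- l) ^^ p) (pr (pexp_term l (n - p)) alpha)))"
proof -
  have "(1 / fact n * of_nat (n choose p) :: 'k) = 1 / fact p * (1 / fact (n - p))" if "p \<le> n" for p
    by (simp add: binomial_fact[OF that] field_simps)
  then show ?thesis
    using pr_ad_pow[OF l alpha, of one n]
    by (simp add: pr_one_left rmult_pow_one pexp_term_def rmult_pow_scale scale_sum_right
        del: ppow.simps cong: sum.cong) (simp add: algebra_simps)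
qed

lemma eq_upto_sum_by_weight:
  assumes B: "\<And>g. wt_ge (\<Sum>i<n. g i) (B g)"
  shows "eq_upto M (\<Sum>g\<in>PiE {..<n} (\<lambda>_. {1..M}). B g) (\<Sum>N\<le>M. \<Sum>g\<in>compositions n N. B g)"
proof -
  let ?A = "PiE {..<n} (\<lambda>_. {1..M})"
  let ?w = "\<lambda>g. \<Sum>i<n. g i"
  have fin: "finite ?A" by (auto intro: finite_PiE)
  have split: "(\<Sum>g\<in>?A. B g) = (\<Sum>g\<in>{g\<in>?A. ?w g \<le> M}. B g) + (\<Sum>g\<in>{g\<in>?A. \<not> ?w g \<le> M}. B g)"
    using fin by (simp add: sum.inter_filter flip: sum.distrib) (rule sum.cong; simp)
  have high: "eq_upto M (\<Sum>g\<in>{g\<in>?A. \<not> ?w g \<le> M}. B g) 0"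
    unfolding eq_upto_0_iff by (intro wt_ge_sum wt_ge_mono[OF B]) auto
  have "(\<Sum>N\<le>M. \<Sum>g\<in>compositions n N. B g) = (\<Sum>N\<le>M. \<Sum>g\<in>{g\<in>{g\<in>?A. ?w g \<le> M}. ?w g = N}. B g)"
  proof (intro sum.cong refl)
    fix N assume "N \<in> {..M}"
    then have "{g\<in>{g\<in>?A. ?w g \<le> M}. ?w g = N} = {g\<in>?A. ?w g = N}" by auto
    with \<open>N \<in> {..M}\<close> show "compositions n N = {g\<in>{g\<in>?A. ?w g \<le> M}. ?w g = N}"
      using compositions_eq_bounded[of N M n] by simp
  qed
  also have "\<dots> = (\<Sum>g\<in>{g\<in>?A. ?w g \<le> M}. B g)"
    by (rule sum.group) (use fin in auto)
  finally show ?thesis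
    using eq_upto_add[OF eq_upto_refl high] unfolding split by simp
qed

lemma eq_upto_sum_triangle:
  assumes H: "\<And>i j. wt_ge (i + j) (H i j)"
  shows "eq_upto M (\<Sum>i\<le>M. \<Sum>j\<le>M. H i j) (\<Sum>n\<le>M. \<Sum>p\<le>n. H p (n - p))"
proof -
  let ?B = "{..M} \<times> {..M}" and ?T = "{(i, j). i + j \<le> M}"
  have "(\<Sum>i\<le>M. \<Sum>j\<le>M. H i j) = (\<Sum>(i, j)\<in>?B - ?T. H i j) + (\<Sum>(i, j)\<in>?T. H i j)"
    by (subst sum.cartesian_product) (rule sum.subset_diff; auto)
  moreover have "(\<Sum>(i, j)\<in>?T. H i j) = (\<Sum>n\<le>M. \<Sum>p\<le>n. H p (n - p))"
    by (rule sum.triangle_reindex_eq)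
  moreover have "eq_upto M (\<Sum>(i, j)\<in>?B - ?T. H i j) 0"
    unfolding eq_upto_0_iff by (intro wt_ge_sum) (auto intro!: wt_ge_mono[OF H])
  ultimately show ?thesis
    using eq_upto_add[OF _ eq_upto_refl] by fastforce
qed

lemma circ_eq_upto:
  assumes "wt_ge 1 (c - one)"
  shows "eq_upto M (circ scale pr one prj a c) (\<Sum>n\<le>M. scale (1 / fact n) (brace pr n a (\<lambda>_. c - one)))"
  unfolding circ_def
proof (rule the_wsums_eq_upto)
  show "wt_ge n (scale (1 / fact n) (brace pr n a (\<lambda>_. c - one)))" for n
    using brace_wt_ge[of n "\<lambda>_. 1" "\<lambda>_. c - one" 0 a] assms by (simp add: wt_ge_scale)
qed

lemma circ_pexp_eq_upto:
  assumes l: "l \<in> hdeg 0" "wt_ge 1 l"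
  shows "eq_upto M (\<Sum>n\<le>M. scale (1 / fact n) (brace pr n a (\<lambda>_. pexp scale pr one prj l - one)))
                   (\<Sum>N\<le>M. scale (1 / fact N) ((rmult l ^^ N) a))"
proof -
  define T where "T = (\<Sum>k\<in>{1..M}. pexp_term l k)"
  have "{..M} = insert 0 {1..M}" by auto
  then have "eq_upto M (pexp scale pr one prj l - one) T"
    using eq_upto_diff[OF pexp_eq_upto[OF l(2)] eq_upto_refl, of M one] by (simp add: T_def)
  then have "eq_upto M (\<Sum>n\<le>M. scale (1 / fact n) (brace pr n a (\<lambda>_. pexp scale pr one prj l - one)))
                       (\<Sum>n\<le>M. scale (1 / fact n) (brace pr n a (\<lambda>_. T)))"
    by (intro eq_upto_sum eq_upto_scale brace_eq_upto eq_upto_refl)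
  also have "eq_upto M (\<Sum>n\<le>M. scale (1 / fact n) (brace pr n a (\<lambda>_. T)))
      (\<Sum>n\<le>M. scale (1 / fact n) (\<Sum>N\<le>M. \<Sum>g\<in>compositions n N. brace_terms l n a g))"
  proof (intro eq_upto_sum eq_upto_scale)
    fix n
    have "wt_ge (\<Sum>i<n. g i) (brace_terms l n a g)" for g
      using brace_wt_ge[of n g "\<lambda>i. pexp_term l (g i)" 0 a] pexp_term_wt_ge[OF l(2)]
      by (simp add: brace_terms_def)
    then show "eq_upto M (brace pr n a (\<lambda>_. T)) (\<Sum>N\<le>M. \<Sum>g\<in>compositions n N. brace_terms l n a g)"
      unfolding T_def brace_expand[OF finite_atLeastAtMost] brace_terms_def[symmetric]
      by (rule eq_upto_sum_by_weight)
  qed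
  also have "(\<Sum>n\<le>M. scale (1 / fact n) (\<Sum>N\<le>M. \<Sum>g\<in>compositions n N. brace_terms l n a g))
      = (\<Sum>N\<le>M. circ_part l N a)"
  proof -
    have "(\<Sum>n\<le>M. scale (1 / fact n) (\<Sum>g\<in>compositions n N. brace_terms l n a g)) = circ_part l N a"
      if "N \<le> M" for N
      unfolding circ_part_def using that
      by (intro sum.mono_neutral_right) (auto simp: compositions_empty)
    moreover have "(\<Sum>n\<le>M. scale (1 / fact n) (\<Sum>N\<le>M. \<Sum>g\<in>compositions n N. brace_terms l n a g))
        = (\<Sum>N\<le>M. \<Sum>n\<le>M. scale (1 / fact n) (\<Sum>g\<in>compositions n N. brace_terms l n a g))"
      by (subst sum.swap) (intro sum.cong refl scale_sum_right)
    ultimately show ?thesis by simp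
  qed
  finally show ?thesis by (simp add: circ_part_eq_rmult_pow[OF l(1)])
qed

lemma ad_exp_eq_upto:
  assumes l: "l \<in> hdeg 0" "wt_ge 1 l" and alpha: "alpha \<in> hdeg k"
  shows "eq_upto M (\<Sum>N\<le>M. scale (1 / fact N) ((rmult (- l) ^^ N) (pr (\<Sum>q\<le>M. pexp_term l q) alpha)))
                   (\<Sum>n\<le>M. scale (1 / fact n) ((ad pr l ^^ n) alpha))"
proof -
  define H where "H p q = scale (1 / fact p) ((rmult (- l) ^^ p) (pr (pexp_term l q) alpha))" for p q
  have "wt_ge (p + q) (H p q)" for p q
    using rmult_pow_wt_ge[OF wt_ge_minus[OF l(2)] wt_ge_pr[OF pexp_term_wt_ge[OF l(2), of q] wt_ge_0[of alpha]], of p]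
    by (simp add: H_def wt_ge_scale add.commute)
  then have "eq_upto M (\<Sum>p\<le>M. \<Sum>q\<le>M. H p q) (\<Sum>n\<le>M. \<Sum>p\<le>n. H p (n - p))"
    by (rule eq_upto_sum_triangle)
  then show ?thesis
    by (simp add: H_def ad_pow_expansion[OF l(1) alpha] rmult_pow.sum rmult_pow_scale scale_sum_right)
qed

end

lemma complete_preLie_if_wg_dg_preLie:
  assumes "wg_dg_preLie scale pr one d hdeg wt prj"
  shows "complete_preLie scale pr one hdeg wt prj"
  using assms unfolding wg_dg_preLie_def complete_preLie_def
  by (elim conjE, intro conjI) (assumption | meson)+

theorem proposition4p7:
  fixes scale :: "'k::field_char_0 \<Rightarrow> 'a::ab_group_add \<Rightarrow> 'a"
    and pr :: "'a \<Rightarrow> 'a \<Rightarrow> 'a" and one :: 'a and d :: "'a \<Rightarrow> 'a"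
    and hdeg :: "int \<Rightarrow> 'a set" and wt :: "nat \<Rightarrow> 'a set" and prj :: "nat \<Rightarrow> 'a \<Rightarrow> 'a"
    and alpha lam :: 'a
  assumes A: "wg_dg_preLie scale pr one d hdeg wt prj"
    and MC_deg: "alpha \<in> hdeg (-1)"
    and MC: "lie_br pr (-1) (-1) alpha alpha = 0"
    and lam_deg: "lam \<in> hdeg 0"
    and lam_g: "prj 0 lam = 0"
  shows "wsums prj (\<lambda>n. scale (1 / fact n) ((ad pr lam ^^ n) alpha))
           (circ scale pr one prj (pr (pexp scale pr one prj lam) alpha) (pexp scale pr one prj (- lam)))"
proof -
  interpret complete_preLie scale pr one hdeg wt prj
    by (rule complete_preLie_if_wg_dg_preLie[OF A])
  let ?E = "pexp scale pr one prj lam" and ?E' = "pexp scale pr one prj (- lam)"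
  have lam: "wt_ge 1 lam" "wt_ge 1 (- lam)" using lam_g by (simp_all add: wt_ge_def)
  have "eq_upto 0 ?E' one" using pexp_eq_upto[OF lam(2), of 0] by simp
  then have E'_one: "wt_ge 1 (?E' - one)" by (simp add: eq_upto_def wt_ge_def)
  have "prj m (circ scale pr one prj (pr ?E alpha) ?E') = prj m (\<Sum>n\<le>m. scale (1 / fact n) ((ad pr lam ^^ n) alpha))"
    for m
  proof -
    note lam' = hdeg_minus[OF lam_deg] lam(2)
    have "eq_upto m (circ scale pr one prj (pr ?E alpha) ?E')
        (\<Sum>N\<le>m. scale (1 / fact N) ((rmult (- lam) ^^ N) (pr ?E alpha)))"
      using eq_upto_trans[OF circ_eq_upto[OF E'_one] circ_pexp_eq_upto[OF lam']] .
    also have "eq_upto m \<dots> (\<Sum>N\<le>m. scale (1 / fact N) ((rmult (- lam) ^^ N) (pr (\<Sum>q\<le>m. pexp_term lam q) alpha)))"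
      by (intro eq_upto_sum eq_upto_scale rmult_pow_eq_upto eq_upto_pr pexp_eq_upto[OF lam(1)] eq_upto_refl)
    also have "eq_upto m \<dots> (\<Sum>n\<le>m. scale (1 / fact n) ((ad pr lam ^^ n) alpha))"
      by (rule ad_exp_eq_upto[OF lam_deg lam(1) MC_deg])
    finally show ?thesis by (simp add: eq_upto_def)
  qed
  moreover have "wt_ge n (scale (1 / fact n) ((ad pr lam ^^ n) alpha))" for n
    by (simp add: ad_wt_ge[OF lam(1)] wt_ge_scale)
  ultimately show ?thesis by (simp add: wsums_iff)
qed

end
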